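(* Let $\widetilde{\mathbb{F}}$ be a field of characteristic $p>2$, and $\mathbb{F}$ a field algebraic over $\mathbb{F}_p$. Let $f:\mathbb{F}\to\widetilde{\mathbb{F}}$ be an SD-map. Then $f$ is a field homomorphism of $\mathbb{F}$ onto its image, except when $\mathbb{F}=\mathbb{F}_5$, in which case $f$ can alternatively be only the map $w\mapsto w^3$ (with $\mathbb{F}_5$ identified with the prime subfield of $\widetilde{\mathbb{F}}$).
   Context: $\mathbb{F}_p$ denotes the field with $p$ elements. A map $f:\mathbb{F}\to\widetilde{\mathbb{F}}$ between fields is called an SD-map if for all $x\neq y$ in $\mathbb{F}$ one has $f(x)\neq f(y)$ and \[ f\left(\frac{x+y}{x-y}\right)=\frac{f(x)+f(y)}{f(x)-f(y)}. \] *)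

theory Defs
  imports "HOL-Computational_Algebra.Polynomial"
begin

definition SD_map :: "('a::field \<Rightarrow> 'b::field) \<Rightarrow> bool" where
  "SD_map f \<longleftrightarrow> (\<forall>x y. x \<noteq> y \<longrightarrow>
      f x \<noteq> f y \<and> f ((x + y) / (x - y)) = (f x + f y) / (f x - f y))"

definition algebraic_over_prime_field :: "'a::field itself \<Rightarrow> bool" where
  "algebraic_over_prime_field _ \<longleftrightarrow> (\<forall>x::'a. \<exists>q :: int poly.
      map_poly (of_int :: int \<Rightarrow> 'a) q \<noteq> 0 \<and> poly (map_poly of_int q) x = 0)"

end

theory Submission
  imports Defs "HOL-Number_Theory.Cong"
begin

text \<open>An SD-map fixes 0 and 1, is odd and multiplicative, and its defining identity takes
  the form f(x+y) (f x - f y) = f(x-y) (f x + f y). Using it for the pairs (x,1), (x,2), (x+1,1),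
  (x-1,1) and eliminating f(x+2), f(x-2) shows, with f 2 = 2s, that f(x-1) = s (f x - 1) or
  (f x + 1) f(x-1) = s. The pairs (2,1), (4,1), (5,1) give f 2 = 2 or f 2 ^ 2 = -1, and the latter
  forces characteristic 5 and s = -1. If s = 1, f fixes the prime field, and for x outside it
  the alternatives at x and x+1 give f(x+1) = f x + 1 unless f(x+1) = f(-x), i.e. x = -1/2,
  which lies in the prime field; multiplicativity turns this into additivity. If s = -1 the
  same alternatives are contradictory for every x outside the prime field, so the field is
  \<open>\<bbbF>\<^sub>5\<close>, where f is w \<mapsto> w ^ 3.\<close>

lemma add_div_diff_eq_iff:
  fixes s t c :: "'a::field"
  assumes "(2::'a) \<noteq> 0" "c \<noteq> 0" "s \<noteq> c" "t \<noteq> c"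
  shows "(s + c) / (s - c) = (t + c) / (t - c) \<longleftrightarrow> s = t"
proof
  assume "(s + c) / (s - c) = (t + c) / (t - c)"
  then have "(s + c) * (t - c) = (t + c) * (s - c)"
    using assms by (simp add: frac_eq_eq)
  then have "2 * c * (t - s) = 0"
    by (simp add: algebra_simps)
  then show "s = t"
    using assms(1,2) by simp
qed simp

lemma two_neq_zero_if_odd_CHAR:
  assumes "odd CHAR('a::field)"
  shows "(2::'a) \<noteq> 0"
proof
  assume "(2::'a) = 0"
  then have "CHAR('a) dvd 2"
    using of_nat_eq_0_iff_char_dvd[where 'a='a, of 2] by simp
  then have "CHAR('a) \<le> 2"
    by (rule dvd_imp_le) simp
  with assms show False
    using CHAR_not_1[where 'a='a] by (auto simp: le_Suc_eq numeral_2_eq_2)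
qed

lemma half_in_Ints:
  assumes "odd CHAR('a::field)"
  shows "1 / 2 \<in> (\<int> :: 'a set)"
proof -
  obtain m where m: "CHAR('a) = 2 * m + 1"
    using assms oddE by blast
  have "2 * of_nat (m + 1) = (of_nat CHAR('a) + 1 :: 'a)"
    unfolding m by simp
  then have "(of_nat (m + 1) :: 'a) = 1 / 2"
    using two_neq_zero_if_odd_CHAR[OF assms] by (simp add: eq_divide_eq mult.commute)
  then show ?thesis
    by (metis Ints_of_nat)
qed

locale SD_map_char_not_2 =
  fixes f :: "'a::field \<Rightarrow> 'b::field"
  assumes SD_map: "SD_map f"
    and two_neq_zero_dom: "(2::'a) \<noteq> 0"
    and two_neq_zero_cod: "(2::'b) \<noteq> 0"
begin

lemma f_eq_iff [simp]: "f x = f y \<longleftrightarrow> x = y"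
  using SD_map unfolding SD_map_def by blast

lemma f_add_div_diff:
  "x \<noteq> y \<Longrightarrow> f ((x + y) / (x - y)) = (f x + f y) / (f x - f y)"
  using SD_map unfolding SD_map_def by blast

lemma f_0 [simp]: "f 0 = 0"
proof (rule ccontr)
  assume "f 0 \<noteq> 0"
  moreover have "(f 1 + f 0) / (f 1 - f 0) = (f (-1) + f 0) / (f (-1) - f 0)"
    using f_add_div_diff[of 1 0] f_add_div_diff[of "-1" 0] by simp
  ultimately have "f 1 = f (-1)"
    using add_div_diff_eq_iff[OF two_neq_zero_cod] by simp
  moreover have "(1::'a) \<noteq> -1"
    using two_neq_zero_dom by (metis add_eq_0_iff one_add_one)
  ultimately show False
    by simp
qed

lemma f_eq_0_iff [simp]: "f x = 0 \<longleftrightarrow> x = 0"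
  using f_eq_iff[of x 0] by simp

lemma f_1 [simp]: "f 1 = 1"
  using f_add_div_diff[of 1 0] by simp

lemma f_minus: "f (- x) = - f x"
proof (cases "x = 0")
  case False
  then have "x \<noteq> - x"
    using two_neq_zero_dom by (metis add_eq_0_iff mult_2 mult_eq_0_iff)
  then have "(f x + f (- x)) / (f x - f (- x)) = 0"
    using f_add_div_diff[of x "- x"] by simp
  moreover have "f x - f (- x) \<noteq> 0"
    using \<open>x \<noteq> - x\<close> by simp
  ultimately show ?thesis
    by (simp add: add_eq_0_iff)
qed simp

lemma f_divide: "f (x / y) = f x / f y"
proof -
  consider "y = 0" | "x = y" "y \<noteq> 0" | "x \<noteq> y" "y \<noteq> 0"
    by blast
  then show ?thesis
  proof cases
    case 3
    have "(x / y + 1) / (x / y - 1) = (x + y) / (x - y)"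
      using 3 by (simp add: field_simps)
    then have "(f (x / y) + 1) / (f (x / y) - 1) = (f x + f y) / (f x - f y)"
      using f_add_div_diff[of "x / y" 1] f_add_div_diff[OF 3(1)] 3 by simp
    also have "\<dots> = (f x / f y + 1) / (f x / f y - 1)"
      using 3 by (simp add: field_simps)
    finally show ?thesis
      using add_div_diff_eq_iff[OF two_neq_zero_cod, of 1 "f (x / y)" "f x / f y"] 3
        f_eq_iff[of "x / y" 1]
      by simp
  qed simp_all
qed

lemma f_mult: "f (x * y) = f x * f y"
  using f_divide[of x "1 / y"] f_divide[of 1 y] by simp

lemma f_add_diff_relation:
  assumes "x \<noteq> y"
  shows "f (x + y) * (f x - f y) = f (x - y) * (f x + f y)"
proof -
  have "f (x + y) / f (x - y) = (f x + f y) / (f x - f y)"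
    using f_add_div_diff[OF assms] f_divide by simp
  then show ?thesis
    using assms by (simp add: frac_eq_eq)
qed

lemma f_two_eq_or_square_eq_minus_one:
  assumes three: "(3::'a) \<noteq> 0"
  shows "f 2 = 2 \<or> f 2 ^ 2 = -1"
proof -
  have "(4::'a) \<noteq> 0"
    using two_neq_zero_dom mult_eq_0_iff[of "2::'a" 2] by simp
  then have neq: "(2::'a) \<noteq> 1" "(4::'a) \<noteq> 1" "(5::'a) \<noteq> 1" "(2::'a) \<noteq> -1"
    using three right_minus_eq[of "2::'a" 1] right_minus_eq[of "4::'a" 1]
      right_minus_eq[of "5::'a" 1] eq_neg_iff_add_eq_0[of "2::'a" 1] by simp_all
  define c where "c = f 2"
  have c: "c \<noteq> 0" "c + 1 \<noteq> 0"
    using two_neq_zero_dom f_eq_iff[of 2 "-1"] neq(4) f_minus[of 1]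
    unfolding c_def by (auto simp only: add_eq_0_iff2 f_eq_0_iff f_1)
  have f4: "f 4 = c * c" and f6: "f 6 = c * f 3"
    using f_mult[of 2 2] f_mult[of 2 3] unfolding c_def by simp_all
  have "f 3 * (c - 1) = c + 1"
    using f_add_diff_relation[OF neq(1)] unfolding c_def by simp
  moreover have "f 5 * (c * c - 1) = f 3 * (c * c + 1)"
    using f_add_diff_relation[OF neq(2)] f4 by simp
  moreover have "f 3 * (f 5 - 1) = c * (f 5 + 1)"
    using f_add_diff_relation[OF neq(3)] f4 f6 c(1) by (simp add: mult.assoc)
  ultimately have "(c - 2) * (c ^ 2 + 1) = 0"
    using c two_neq_zero_cod by algebra
  then show ?thesis
    unfolding c_def by (simp add: eq_neg_iff_add_eq_0)
qed

lemma f_diff_one_cases: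
  assumes "x \<notin> {0, 1, 2}" and "f 2 = 2 * s" and "s ^ 2 = 1"
  shows "f (x - 1) = s * (f x - 1) \<or> (f x + 1) * f (x - 1) = s"
proof -
  define u a b d e where
    "u = f x" "a = f (x + 1)" "b = f (x - 1)" "d = f (x + 2)" "e = f (x - 2)"
  have shifts: "x + 1 + 1 = x + 2" "x + 1 - 1 = x" "x - 1 + 1 = x" "x - 1 - 1 = x - 2"
    by simp_all
  have "x - 1 \<noteq> 1"
    using assms(1) right_minus_eq[of x 2] by (auto simp: algebra_simps)
  have rel1: "a * (u - 1) = b * (u + 1)"
    using f_add_diff_relation[of x 1] assms(1) unfolding u_a_b_d_e_def by simp
  have "d * (u - 2 * s) = e * (u + 2 * s)"
    using f_add_diff_relation[of x 2] assms(1,2) unfolding u_a_b_d_e_def by simp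
  moreover have "d * (a - 1) = u * (a + 1)"
    using f_add_diff_relation[of "x + 1" 1] assms(1) unfolding u_a_b_d_e_def shifts by simp
  moreover have "u * (b - 1) = e * (b + 1)"
    using f_add_diff_relation[OF \<open>x - 1 \<noteq> 1\<close>] unfolding u_a_b_d_e_def shifts by simp
  ultimately have "u * ((a + 1) * (b + 1) * (u - 2 * s) - (a - 1) * (b - 1) * (u + 2 * s)) = 0"
    by algebra
  then have "(a + 1) * (b + 1) * (u - 2 * s) - (a - 1) * (b - 1) * (u + 2 * s) = 0"
    using assms(1) unfolding u_a_b_d_e_def by simp
  then have "2 * (2 * ((b - s * (u - 1)) * ((u + 1) * b - s))) = 0"
    using rel1 assms(3) by algebra
  then show ?thesis
    using two_neq_zero_cod unfolding u_a_b_d_e_def by (simp only: mult_eq_0_iff right_minus_eq) simp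
qed

end

locale SD_map_odd_char =
  fixes f :: "'a::field \<Rightarrow> 'b::field"
  assumes SD_map: "SD_map f"
    and CHAR_eq: "CHAR('b) = CHAR('a)"
    and odd_CHAR: "odd CHAR('a)"

sublocale SD_map_odd_char \<subseteq> SD_map_char_not_2
proof
  show "(2::'a) \<noteq> 0"
    using odd_CHAR by (rule two_neq_zero_if_odd_CHAR)
  show "(2::'b) \<noteq> 0"
    using odd_CHAR CHAR_eq by (intro two_neq_zero_if_odd_CHAR) simp
qed (rule SD_map)

context SD_map_odd_char
begin

lemma of_nat_eq_0_cod_iff: "(of_nat n :: 'b) = 0 \<longleftrightarrow> (of_nat n :: 'a) = 0"
  by (simp add: of_nat_eq_0_iff_char_dvd CHAR_eq)

lemma f_two_cases: "f 2 = 2 \<or> f 2 = -2 \<and> CHAR('a) = 5"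
proof (cases "(3::'a) = 0")
  case True
  then have "(2::'a) = -1" and "(2::'b) = -1"
    using of_nat_eq_0_cod_iff[of 3] by (simp_all add: eq_neg_iff_add_eq_0)
  then have "f 2 = 2"
    by (metis f_1 f_minus)
  then show ?thesis ..
next
  case False
  show ?thesis
    using f_two_eq_or_square_eq_minus_one[OF False]
  proof
    assume square: "f 2 ^ 2 = -1"
    then have "f 4 = f (-1)"
      using f_mult[of 2 2] f_minus[of 1] by (simp add: power2_eq_square)
    then have "(5::'a) = 0" and "(5::'b) = 0"
      using of_nat_eq_0_cod_iff[of 5] by (simp_all add: eq_neg_iff_add_eq_0)
    have "CHAR('a) dvd 5"
      using \<open>(5::'a) = 0\<close> of_nat_eq_0_iff_char_dvd[where 'a='a, of 5] by simp
    then have "CHAR('a) = 5"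
      using prime_nat_iff[of 5] CHAR_not_1[where 'a='a] by auto
    have "(f 2 - 2) * (f 2 + 2) = f 2 ^ 2 + 1 - 5"
      by algebra
    then have "(f 2 - 2) * (f 2 + 2) = 0"
      using square \<open>(5::'b) = 0\<close> by simp
    then show ?thesis
      using \<open>CHAR('a) = 5\<close> by (auto simp: eq_neg_iff_add_eq_0)
  qed simp
qed

lemma f_of_nat:
  assumes "f 2 = 2"
  shows "f (of_nat n) = of_nat n"
proof (induction n rule: induct_nat_012)
  case (ge2 n)
  show ?case
  proof (cases "(of_nat n :: 'a) = 0")
    case True
    then show ?thesis
      using assms of_nat_eq_0_cod_iff[of n] by (simp add: add.commute)
  next
    case False
    then have "f (of_nat n + 2) * of_nat n = of_nat n * (of_nat n + 2)"
      using f_add_diff_relation[of "of_nat n + 1" 1] ge2.IH by (simp add: algebra_simps)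
    then show ?thesis
      using False of_nat_eq_0_cod_iff[of n] by (simp add: add.commute)
  qed
qed simp_all

lemma f_of_int:
  assumes "f 2 = 2"
  shows "f (of_int k) = of_int k"
proof (cases k rule: int_cases)
  case (nonneg n)
  then show ?thesis
    using f_of_nat[OF assms, of n] by simp
next
  case (neg n)
  then show ?thesis
    using f_of_nat[OF assms, of "Suc n"] f_minus[of "of_nat (Suc n)"] by (simp del: of_nat_Suc)
qed

lemma f_add_one_neq_minus:
  assumes "x \<notin> \<int>"
  shows "f (x + 1) \<noteq> - f x"
proof
  assume "f (x + 1) = - f x"
  then have "x + 1 = - x"
    by (metis f_eq_iff f_minus)
  then have "2 * x = -1"
    by algebra
  then have "x = - (1 / 2)"
    using two_neq_zero_dom by (simp add: field_simps)
  then show False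
    using assms half_in_Ints[OF odd_CHAR] by simp
qed

lemma f_add_one:
  assumes "f 2 = 2"
  shows "f (x + 1) = f x + 1"
proof (cases "x \<in> \<int>")
  case True
  then obtain k where "x = of_int k"
    by (auto elim: Ints_cases)
  then show ?thesis
    using f_of_int[OF assms, of k] f_of_int[OF assms, of "k + 1"] by simp
next
  case False
  then have "x + 1 \<notin> \<int>"
    using Ints_diff[of "x + 1" 1] by auto
  have "x \<notin> {0, 1, 2}" "x + 1 \<notin> {0, 1, 2}"
    using False \<open>x + 1 \<notin> \<int>\<close> by (metis Ints_0 Ints_1 Ints_numeral empty_iff insertE)+
  define u a b where "u = f x" "a = f (x + 1)" "b = f (x - 1)"
  have at_x: "b = u - 1 \<or> (u + 1) * b = 1"
    using f_diff_one_cases[of x 1] \<open>x \<notin> {0, 1, 2}\<close> assms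
    unfolding u_a_b_def by simp
  have at_x_plus_1: "u = a - 1 \<or> (a + 1) * u = 1"
    using f_diff_one_cases[of "x + 1" 1] \<open>x + 1 \<notin> {0, 1, 2}\<close> assms
    unfolding u_a_b_def by simp
  have rel: "a * (u - 1) = b * (u + 1)"
    using f_add_diff_relation[of x 1] \<open>x \<notin> {0, 1, 2}\<close> unfolding u_a_b_def by simp
  have "u \<noteq> 1"
    using False unfolding u_a_b_def by (metis Ints_1 f_1 f_eq_iff)
  show ?thesis
  proof (rule ccontr)
    assume "f (x + 1) \<noteq> f x + 1"
    then have "(a + 1) * u = 1"
      using at_x_plus_1 unfolding u_a_b_def by auto
    moreover have "b \<noteq> u - 1"
    proof
      assume "b = u - 1"
      then have "(u - 1) * (a - (u + 1)) = 0"
        using rel by algebra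
      then show False
        using \<open>u \<noteq> 1\<close> \<open>f (x + 1) \<noteq> f x + 1\<close> unfolding u_a_b_def by simp
    qed
    ultimately have "a = - u"
      using at_x rel by algebra
    then show False
      using f_add_one_neq_minus[OF False] unfolding u_a_b_def by simp
  qed
qed

lemma f_add:
  assumes "f 2 = 2"
  shows "f (x + y) = f x + f y"
proof (cases "y = 0")
  case False
  have "f (x + y) = f (y * (x / y + 1))"
    using False by (simp add: field_simps)
  also have "\<dots> = f y * (f x / f y + 1)"
    using f_mult f_add_one[OF assms] f_divide by simp
  also have "\<dots> = f x + f y"
    using False by (simp add: field_simps)
  finally show ?thesis .
qed simp

lemma in_Ints_if_f_two_eq_minus_two:
  fixes x :: 'a
  assumes "f 2 = -2"
  shows "x \<in> \<int>"
proof (rule ccontr)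
  assume "x \<notin> \<int>"
  then have "x + 1 \<notin> \<int>"
    using Ints_diff[of "x + 1" 1] by auto
  have "x \<notin> {0, 1, 2}" "x + 1 \<notin> {0, 1, 2}"
    using \<open>x \<notin> \<int>\<close> \<open>x + 1 \<notin> \<int>\<close> by (metis Ints_0 Ints_1 Ints_numeral empty_iff insertE)+
  define u a b where "u = f x" "a = f (x + 1)" "b = f (x - 1)"
  have at_x: "b = 1 - u \<or> (u + 1) * b = -1"
    using f_diff_one_cases[of x "-1"] \<open>x \<notin> {0, 1, 2}\<close> assms
    unfolding u_a_b_def by (simp add: algebra_simps)
  have at_x_plus_1: "u = 1 - a \<or> (a + 1) * u = -1"
    using f_diff_one_cases[of "x + 1" "-1"] \<open>x + 1 \<notin> {0, 1, 2}\<close> assms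
    unfolding u_a_b_def by (simp add: algebra_simps)
  have rel: "a * (u - 1) = b * (u + 1)"
    using f_add_diff_relation[of x 1] \<open>x \<notin> {0, 1, 2}\<close> unfolding u_a_b_def by simp
  have "u \<noteq> f y" if "y \<in> \<int>" for y
    using \<open>x \<notin> \<int>\<close> that unfolding u_a_b_def by auto
  then have u: "u \<noteq> 0" "u \<noteq> 1" "u \<noteq> -1" "u \<noteq> 2"
    using f_minus[of 1] f_minus[of 2] assms by (metis Ints_0 Ints_1 Ints_minus Ints_numeral f_0 f_1
        minus_minus)+
  have "a \<noteq> - u"
    using f_add_one_neq_minus[OF \<open>x \<notin> \<int>\<close>] unfolding u_a_b_def .
  from at_x show False
  proof
    assume "b = 1 - u"
    then have "(u - 1) * (a + (u + 1)) = 0"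
      using rel by algebra
    then have "a + (u + 1) = 0"
      using u(2) by simp
    moreover have "1 - a = u + 2"
      using \<open>a + (u + 1) = 0\<close> by algebra
    then have "(a + 1) * u = -1"
      using at_x_plus_1 two_neq_zero_cod by auto
    ultimately have "(u - 1) * (u + 1) = 0"
      by algebra
    then show False
      using u(2,3) by (simp add: eq_neg_iff_add_eq_0)
  next
    assume "(u + 1) * b = -1"
    with rel have "a * (u - 1) = -1"
      by (simp add: mult.commute)
    show False
      using at_x_plus_1
    proof
      assume "u = 1 - a"
      then have "u * (u - 2) = 0"
        using \<open>a * (u - 1) = -1\<close> by algebra
      then show False
        using u(1,4) by simp
    next
      assume "(a + 1) * u = -1"
      then have "a = - u"
        using \<open>a * (u - 1) = -1\<close> by algebra
      then show False
        using \<open>a \<noteq> - u\<close> by simp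
    qed
  qed
qed

lemma f_of_nat_eq_cube:
  assumes "f 2 = -2" and "CHAR('a) = 5"
  shows "f (of_nat n) = of_nat n ^ 3"
proof -
  define k where "k = (int n + 2) mod 5 - 2"
  have "[int n = k] (mod 5)"
    unfolding k_def cong_def by (simp add: mod_diff_left_eq)
  then have "(of_nat n :: 'a) = of_int k" and "(of_nat n ^ 3 :: 'b) = of_int (k ^ 3)"
    using assms(2) CHAR_eq of_int_eq_iff_cong_CHAR[where 'a='a, of "int n" k]
      of_int_eq_iff_cong_CHAR[where 'a='b, of "int n ^ 3" "k ^ 3"] by (simp_all add: cong_pow)
  moreover have "(of_int 8 :: 'b) = of_int (-2)"
    unfolding of_int_eq_iff_cong_CHAR using assms(2) CHAR_eq by (simp add: cong_def)
  moreover have "k \<in> {-2..2}"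
    unfolding k_def by auto
  then have "k = -2 \<or> k = -1 \<or> k = 0 \<or> k = 1 \<or> k = 2"
    by auto
  ultimately show ?thesis
    using assms(1) f_minus[of 1] f_minus[of 2] by auto
qed

end

lemma card_UNIV_eq_CHAR_if_Ints:
  assumes "CHAR('a::ring_1) > 0" and "\<And>x::'a. x \<in> \<int>"
  shows "card (UNIV :: 'a set) = CHAR('a)"
proof -
  have "UNIV = (of_nat ` {..<CHAR('a)} :: 'a set)"
  proof (intro set_eqI iffI)
    fix x :: 'a
    obtain k where "x = of_int k"
      using assms(2)[of x] by (auto elim: Ints_cases)
    also have "\<dots> = of_int (k mod int CHAR('a))"
      by (simp add: of_int_eq_iff_cong_CHAR cong_def)
    also have "\<dots> = of_nat (nat (k mod int CHAR('a)))"
      using assms(1) by simp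
    finally have "x = of_nat (nat (k mod int CHAR('a)))" .
    moreover have "nat (k mod int CHAR('a)) < CHAR('a)"
      using assms(1) by (simp add: nat_less_iff)
    ultimately show "x \<in> of_nat ` {..<CHAR('a)}"
      by blast
  qed simp
  moreover have "inj_on (of_nat :: nat \<Rightarrow> 'a) {..<CHAR('a)}"
    by (auto intro!: inj_onI simp: of_nat_eq_iff_cong_CHAR cong_def)
  ultimately show ?thesis
    by (metis card_image card_lessThan)
qed

theorem theorem3p3:
  fixes f :: "'a::field \<Rightarrow> 'b::field" and p :: nat
  assumes "prime p" and "p > 2"
    and "CHAR('b) = p" and "CHAR('a) = p"
    and "algebraic_over_prime_field TYPE('a)"
    and "SD_map f"
  shows "((\<forall>x y. f (x + y) = f x + f y \<and> f (x * y) = f x * f y) \<and> f 1 = 1)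
     \<or> (card (UNIV :: 'a set) = 5 \<and> (\<forall>n::nat. f (of_nat n) = (of_nat n) ^ 3))"
proof -
  interpret SD_map_odd_char f
  proof
    show "SD_map f" by fact
    show "CHAR('b) = CHAR('a)" using assms(3,4) by simp
    show "odd CHAR('a)" using assms(1,2,4) prime_odd_nat by simp
  qed
  consider "f 2 = 2" | "f 2 = -2" "CHAR('a) = 5"
    using f_two_cases by blast
  then show ?thesis
  proof cases
    case 1
    then show ?thesis
      using f_add f_mult f_1 by blast
  next
    case 2
    then have "card (UNIV :: 'a set) = 5"
      using card_UNIV_eq_CHAR_if_Ints[where 'a='a] in_Ints_if_f_two_eq_minus_two by simp
    then show ?thesis
      using f_of_nat_eq_cube[OF 2] by blast
  qed
qed

end
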